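(* Consider the model described in the context, in the variant where walk-in customers may only choose arrival times in $[0,T]$. Let $F_e$ be an equilibrium arrival distribution (supported in $[0,T]$). Then: (i) $F_e$ has no atom at any time $t\in(0,T]$, i.e. $F_e(t)=\lim_{s\uparrow t}F_e(s)$ for all $t\in(0,T]$; (ii) if $\tau_1>0$ (no scheduled customer at time $0$), then $F_e$ has an atom at $0$, i.e. $F_e(0)>0$. (When $\tau_1=0$, an atom at $0$ is possible but not necessary.)
   Context: Model: a single server operates from time $0$ and stops admitting walk-in customers after time $T>0$; all customers who arrived by time $T$ are served. Service times are i.i.d. exponential with rate $\mu>0$. There are $M\ge1$ scheduled customers with deterministic arrival times $0\le \tau_1<\tau_2<\dots<\tau_M\le T$; set $\tau_0=0$, $\tau_{M+1}=T$. The number of walk-in customers is Poisson distributed with mean $\lambda>0$. Service is first-come first-served, except that scheduled customers have non-preemptive priority over walk-in customers: a service in progress is never interrupted, and whenever the server becomes free, waiting scheduled customers are served (in order of their scheduled times) before any waiting walk-in customer. If several walk-in customers arrive at the same instant, their order in the queue is a uniformly random permutation. Walk-ins use a common (symmetric) mixed strategy: each independently draws its arrival time from a distribution with cdf $F$. The waiting time of a customer is the time from her arrival until her service starts. For a strategy $F$ used by all walk-ins, let $E_w(t)$ denote the expected waiting time of a tagged walk-in customer arriving at time $t$ (averaged over the numbers of other arrivals and, at atoms of $F$, over the random tie-breaking). Definition: $F_e$ is an equilibrium arrival distribution if there is a constant $E_w\ge0$ such that, under the dynamics induced when all walk-ins use $F_e$, $E_w(t)=E_w$ for every $t$ in the support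 of $F_e$ (every time chosen with positive density or positive probability) and $E_w(t)\ge E_w$ for every admissible $t$ outside the support. An atom of $F_e$ at $t$ is a point with $F_e(t)-\lim_{s\uparrow t}F_e(s)>0$. *)

theory Defs
  imports "HOL-Probability.Probability" "HOL-Combinatorics.Permutations"
begin

text \<open>Customers: Inl j = scheduled customer j (j < M, arrival tau ! j);
  Inr i = walk-in customer i (i \<le> n); walk-in n is the tagged customer,
  walk-ins 0..n-1 are the other walk-ins.\<close>

type_synonym cust = "nat + nat"

definition customers :: "nat \<Rightarrow> nat \<Rightarrow> cust set" where
  "customers M n = Inl ` {..<M} \<union> Inr ` {..n}"

definition arr :: "real list \<Rightarrow> (nat \<Rightarrow> real) \<Rightarrow> cust \<Rightarrow> real" where
  "arr tau w c = (case c of Inl j \<Rightarrow> tau ! j | Inr i \<Rightarrow> w i)"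

definition prec :: "real list \<Rightarrow> (nat \<Rightarrow> real) \<Rightarrow> (nat \<Rightarrow> nat) \<Rightarrow> cust \<Rightarrow> cust \<Rightarrow> bool" where
  "prec tau w rk c d = (case (c, d) of
      (Inl j, Inl k) \<Rightarrow> tau ! j < tau ! k
    | (Inl j, Inr i) \<Rightarrow> True
    | (Inr i, Inl j) \<Rightarrow> False
    | (Inr i, Inr k) \<Rightarrow> w i < w k \<or> (w i = w k \<and> rk i < rk k))"

definition next_service ::
  "(cust \<Rightarrow> real) \<Rightarrow> (cust \<Rightarrow> cust \<Rightarrow> bool) \<Rightarrow> cust set \<Rightarrow> real \<Rightarrow> real \<times> cust" where
  "next_service a pr U c =
     (let c' = max c (Min (a ` U))
      in (c', THE i. i \<in> U \<and> a i \<le> c' \<and> (\<forall>j\<in>U. a j \<le> c' \<longrightarrow> j \<noteq> i \<longrightarrow> pr i j)))"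

text \<open>State after k service starts: (time server next becomes free, unserved customers,
  recorded service start times).  Server starts free at time 0.\<close>
primrec run ::
  "(cust \<Rightarrow> real) \<Rightarrow> (cust \<Rightarrow> cust \<Rightarrow> bool) \<Rightarrow> (cust \<Rightarrow> real) \<Rightarrow> cust set \<Rightarrow> nat
     \<Rightarrow> real \<times> cust set \<times> (cust \<Rightarrow> real)" where
  "run a pr S U0 0 = (0, U0, \<lambda>_. 0)"
| "run a pr S U0 (Suc k) =
     (case run a pr S U0 k of (c, U, st) \<Rightarrow>
        if U = {} then (c, U, st)
        else (case next_service a pr U c of (c', i) \<Rightarrow> (c' + S i, U - {i}, st(i := c'))))"

text \<open>Waiting time of the tagged walk-in (arriving at t) given the other walk-ins'
  arrival times x 0..x (n-1), tie-breaking ranks rk on {..n} and service times S.\<close>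
definition tagged_wait ::
  "real list \<Rightarrow> real \<Rightarrow> nat \<Rightarrow> (nat \<Rightarrow> real) \<Rightarrow> (nat \<Rightarrow> nat) \<Rightarrow> (cust \<Rightarrow> real) \<Rightarrow> real" where
  "tagged_wait tau t n x rk S =
     (let w = (\<lambda>i. if i = n then t else x i);
          U0 = customers (length tau) n
      in snd (snd (run (arr tau w) (prec tau w rk) S U0 (card U0))) (Inr n) - t)"

definition exp_service :: "real \<Rightarrow> real measure" where
  "exp_service mu = density lborel (exponential_density mu)"

definition exp_wait :: "real list \<Rightarrow> real \<Rightarrow> real \<Rightarrow> real measure \<Rightarrow> real \<Rightarrow> ennreal" where
  "exp_wait tau mu lam P t =
     (\<Sum>n. ennreal (pmf (poisson_pmf lam) n) *
        (\<integral>\<^sup>+ x. (\<integral>\<^sup>+ rk. (\<integral>\<^sup>+ S. ennreal (tagged_wait tau t n x rk S)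
              \<partial>(PiM (customers (length tau) n) (\<lambda>_. exp_service mu)))
           \<partial>(measure_pmf (pmf_of_set {rk. rk permutes {..n}})))
         \<partial>(PiM {..<n} (\<lambda>_. P))))"

definition dist_support :: "real measure \<Rightarrow> real set" where
  "dist_support P = {t. \<forall>e>0. measure P {t - e<..<t + e} > 0}"

definition is_equilibrium :: "real list \<Rightarrow> real \<Rightarrow> real \<Rightarrow> real \<Rightarrow> real measure \<Rightarrow> bool" where
  "is_equilibrium tau mu lam T P \<longleftrightarrow>
     (\<exists>E::real. E \<ge> 0 \<and>
        (\<forall>t\<in>{0..T}. (t \<in> dist_support P \<longrightarrow> exp_wait tau mu lam P t = ennreal E) \<and>
                     (t \<notin> dist_support P \<longrightarrow> exp_wait tau mu lam P t \<ge> ennreal E)))"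

end

theory Submission
  imports Defs
begin

text \<open>
  Atoms in (0,T]: if P has an atom at t > 0, then with positive probability another walk-in
  arrives exactly at t and is ranked ahead of the tagged customer.  Comparing the two queues
  pathwise, a tagged customer moving from t to t - e is served no later, and such a tied
  customer is then served after her, so E_w(t - e) + G <= E_w(t) + e, where G > 0 is the
  expected service time of tied customers ranked ahead and does not depend on e.  For small e
  this contradicts E_w(t) <= E_w(t - e).

  Atom at 0: if P has no mass on (-inf,0] and no scheduled customer arrives at 0, a walk-in
  arriving at 0 never waits, so the equilibrium wait is 0.  But the median m of P lies in the
  support, and with positive probability a single other walk-in arrives no later than m, is
  served first, and has a service time exceeding m, so E_w(m) > 0.
\<close>

section \<open>Nonnegative integrals\<close>

text \<open>The waiting time is never shown to be measurable in the scenario (other arrivals, ranks,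
  service times), so expected waits are only compared through inequalities that hold for
  arbitrary nonnegative integrands.\<close>

lemma nn_integral_superadditive:
  "integral\<^sup>N M f + integral\<^sup>N M g \<le> (\<integral>\<^sup>+ x. f x + g x \<partial>M)"
proof -
  let ?A = "{s. simple_function M s \<and> s \<le> f}" and ?B = "{s. simple_function M s \<and> s \<le> g}"
  have "?A \<noteq> {}" "?B \<noteq> {}" by (auto intro!: exI[of _ "\<lambda>_. 0"] simp: le_fun_def)
  have "integral\<^sup>N M f + integral\<^sup>N M g = (SUP s\<in>?A. integral\<^sup>S M s + integral\<^sup>N M g)"
    unfolding nn_integral_def[of M f] using ennreal_SUP_add_left[OF \<open>?A \<noteq> {}\<close>] by simp
  also have "\<dots> \<le> (\<integral>\<^sup>+ x. f x + g x \<partial>M)"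
  proof (rule SUP_least)
    fix s assume "s \<in> ?A"
    have "integral\<^sup>S M s + integral\<^sup>N M g = (SUP r\<in>?B. integral\<^sup>S M s + integral\<^sup>S M r)"
      unfolding nn_integral_def[of M g] using ennreal_SUP_add_right[OF \<open>?B \<noteq> {}\<close>] by simp
    also have "\<dots> \<le> (\<integral>\<^sup>+ x. f x + g x \<partial>M)"
    proof (rule SUP_least)
      fix r assume "r \<in> ?B"
      then have "integral\<^sup>S M s + integral\<^sup>S M r = (\<integral>\<^sup>+ x. s x + r x \<partial>M)"
        using \<open>s \<in> ?A\<close> by (simp add: simple_integral_add nn_integral_eq_simple_integral)
      also have "\<dots> \<le> (\<integral>\<^sup>+ x. f x + g x \<partial>M)"
        using \<open>s \<in> ?A\<close> \<open>r \<in> ?B\<close> by (intro nn_integral_mono add_mono) (auto simp: le_fun_def)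
      finally show "integral\<^sup>S M s + integral\<^sup>S M r \<le> (\<integral>\<^sup>+ x. f x + g x \<partial>M)" .
    qed
    finally show "integral\<^sup>S M s + integral\<^sup>N M g \<le> (\<integral>\<^sup>+ x. f x + g x \<partial>M)" .
  qed
  finally show ?thesis .
qed

lemma nn_integral_add_const_le:
  assumes "c \<noteq> \<infinity>"
  shows "(\<integral>\<^sup>+ x. h x + c \<partial>M) \<le> integral\<^sup>N M h + c * emeasure M (space M)"
  unfolding nn_integral_def[of M "\<lambda>x. h x + c"]
proof (rule SUP_least)
  fix s assume "s \<in> {s. simple_function M s \<and> s \<le> (\<lambda>x. h x + c)}"
  then have s: "simple_function M s" "\<And>x. s x \<le> h x + c" by (auto simp: le_fun_def)
  have s_minus: "simple_function M (\<lambda>x. s x - c)" using simple_function_compose1[OF s(1)] .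
  have "integral\<^sup>S M s \<le> integral\<^sup>S M (\<lambda>x. (s x - c) + c)"
    using s(1) simple_function_compose1[OF s(1), of "\<lambda>y. y - c + c"]
    by (intro simple_integral_mono) (auto simp: diff_add_self_ennreal)
  also have "\<dots> = (\<integral>\<^sup>+ x. s x - c \<partial>M) + c * emeasure M (space M)"
    using s_minus by (simp add: simple_integral_add nn_integral_eq_simple_integral)
  also have "(\<integral>\<^sup>+ x. s x - c \<partial>M) \<le> integral\<^sup>N M h"
    using s(2) assms by (intro nn_integral_mono) (simp add: ennreal_minus_le_iff add.commute)
  finally show "integral\<^sup>S M s \<le> integral\<^sup>N M h + c * emeasure M (space M)"
    by (simp add: add_right_mono)
qed

lemma (in prob_space) nn_integral_add_le_add_const:
  assumes "AE x in M. f x + g x \<le> h x + c" "c \<noteq> \<infinity>"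
  shows "integral\<^sup>N M f + integral\<^sup>N M g \<le> integral\<^sup>N M h + c"
proof -
  have "integral\<^sup>N M f + integral\<^sup>N M g \<le> (\<integral>\<^sup>+ x. f x + g x \<partial>M)"
    by (rule nn_integral_superadditive)
  also have "\<dots> \<le> (\<integral>\<^sup>+ x. h x + c \<partial>M)" using assms(1) by (rule nn_integral_mono_AE)
  also have "\<dots> \<le> integral\<^sup>N M h + c"
    using nn_integral_add_const_le[OF assms(2), of M h] emeasure_space_1 by simp
  finally show ?thesis .
qed

lemma nn_integral_PiM_component:
  assumes "\<And>i. i \<in> I \<Longrightarrow> prob_space (M i)" "i \<in> I" "f \<in> borel_measurable (M i)"
  shows "(\<integral>\<^sup>+ x. f (x i) \<partial>PiM I M) = (\<integral>\<^sup>+ y. f y \<partial>M i)"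
proof -
  have "distr (PiM I M) (M i) (\<lambda>x. x i) = M i" using assms(1,2) by (intro distr_PiM_component) auto
  then show ?thesis
    using assms(2,3) nn_integral_distr[of "\<lambda>x. x i" "PiM I M" "M i" f]
    by (simp add: measurable_component_singleton)
qed

lemma AE_PiM_all_components:
  assumes "\<And>i. i \<in> I \<Longrightarrow> prob_space (M i)" "finite I" "\<And>i. i \<in> I \<Longrightarrow> AE y in M i. Q y"
  shows "AE x in PiM I M. \<forall>i\<in>I. Q (x i)"
  using assms(2)
proof (rule eventually_ball_finite, intro ballI)
  fix i assume "i \<in> I"
  then show "AE x in PiM I M. Q (x i)" using AE_PiM_component[of I M i Q] assms(1,3) by simp
qed

lemma suminf_ennreal_pmf: "(\<Sum>n. ennreal (pmf p n)) = 1"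
proof -
  have "(\<Sum>n. ennreal (pmf p n)) = (\<integral>\<^sup>+ n. ennreal (pmf p n) \<partial>count_space UNIV)"
    by (simp add: nn_integral_count_space_nat)
  also have "\<dots> = emeasure (measure_pmf p) UNIV" by (rule nn_integral_pmf)
  finally show ?thesis by simp
qed

section \<open>Priority queues\<close>

lemma fst_next_service: "fst (next_service a pr U c) = max c (Min (a ` U))"
  by (simp add: next_service_def Let_def)

locale priority_queue =
  fixes a :: "cust \<Rightarrow> real" and pr :: "cust \<Rightarrow> cust \<Rightarrow> bool"
    and S :: "cust \<Rightarrow> real" and U0 :: "cust set"
  assumes finite_U0: "finite U0"
    and pr_total: "\<lbrakk>i \<in> U0; j \<in> U0; i \<noteq> j\<rbrakk> \<Longrightarrow> pr i j \<or> pr j i"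
    and pr_asym: "\<lbrakk>i \<in> U0; j \<in> U0; pr i j\<rbrakk> \<Longrightarrow> \<not> pr j i"
    and pr_trans: "\<lbrakk>i \<in> U0; j \<in> U0; k \<in> U0; pr i j; pr j k\<rbrakk> \<Longrightarrow> pr i k"
    and service_nonneg: "i \<in> U0 \<Longrightarrow> 0 \<le> S i"
begin

lemma priority_max_exists:
  assumes "finite Q" "Q \<noteq> {}" "Q \<subseteq> U0"
  shows "\<exists>i\<in>Q. \<forall>j\<in>Q. j \<noteq> i \<longrightarrow> pr i j"
  using assms
proof (induction Q rule: finite_ne_induct)
  case (singleton x)
  then show ?case by auto
next
  case (insert x F)
  then obtain m where m: "m \<in> F" "\<forall>j\<in>F. j \<noteq> m \<longrightarrow> pr m j" by auto
  have x: "x \<in> U0" "x \<noteq> m" and F: "F \<subseteq> U0" using insert m(1) by auto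
  show ?case
  proof (cases "pr x m")
    case True
    have "pr x j" if "j \<in> F" for j
    proof (cases "j = m")
      case False
      then have "pr m j" using m that by blast
      then show ?thesis using pr_trans[of x m j] True x F m(1) that by blast
    qed (use True in simp)
    then show ?thesis by blast
  next
    case False
    then have "pr m x" using pr_total[of x m] x F m(1) by blast
    with m show ?thesis by auto
  qed
qed

definition next_in_line :: "cust set \<Rightarrow> real \<Rightarrow> cust \<Rightarrow> bool" where
  "next_in_line U c i \<longleftrightarrow> i \<in> U \<and> a i \<le> max c (Min (a ` U))
     \<and> (\<forall>j\<in>U. a j \<le> max c (Min (a ` U)) \<longrightarrow> j \<noteq> i \<longrightarrow> pr i j)"

lemma next_in_line_unique:
  assumes "U \<subseteq> U0" "next_in_line U c i" "next_in_line U c j"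
  shows "i = j"
proof (rule ccontr)
  assume "i \<noteq> j"
  with assms(2,3) have "pr i j" "pr j i" unfolding next_in_line_def by auto
  with assms pr_asym[of i j] show False unfolding next_in_line_def by auto
qed

lemma next_in_line_exists:
  assumes "U \<subseteq> U0" "U \<noteq> {}"
  shows "\<exists>i. next_in_line U c i"
proof -
  have fin: "finite U" using assms(1) finite_U0 finite_subset by blast
  then have "Min (a ` U) \<in> a ` U" using assms(2) by simp
  then obtain i0 where i0: "i0 \<in> U" "a i0 = Min (a ` U)" by auto
  define Q where "Q = {j\<in>U. a j \<le> max c (Min (a ` U))}"
  have "i0 \<in> Q" "Q \<subseteq> U0" "finite Q" using i0 assms(1) fin by (auto simp: Q_def)
  then obtain i where "i \<in> Q" "\<forall>j\<in>Q. j \<noteq> i \<longrightarrow> pr i j"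
    using priority_max_exists[of Q] by blast
  then show ?thesis unfolding next_in_line_def Q_def by blast
qed

lemma next_in_line_next_service:
  assumes "U \<subseteq> U0" "U \<noteq> {}"
  shows "next_in_line U c (snd (next_service a pr U c))"
proof -
  have "\<exists>!i. next_in_line U c i"
    using next_in_line_exists[OF assms] next_in_line_unique[OF assms(1)] by blast
  then have "next_in_line U c (THE i. next_in_line U c i)" by (rule theI')
  then show ?thesis by (simp add: next_service_def next_in_line_def Let_def)
qed

lemma snd_next_service_eqI:
  assumes "U \<subseteq> U0" "next_in_line U c i"
  shows "snd (next_service a pr U c) = i"
proof -
  have "U \<noteq> {}" using assms(2) by (auto simp: next_in_line_def)
  then show ?thesis
    using next_in_line_next_service[OF assms(1)] next_in_line_unique[OF assms(1)] assms(2) by blast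
qed

definition "remaining k = fst (snd (run a pr S U0 k))"
definition "free_at k = fst (run a pr S U0 k)"
definition "recorded k = snd (snd (run a pr S U0 k))"
definition "start_time k = fst (next_service a pr (remaining k) (free_at k))"
definition "served k = snd (next_service a pr (remaining k) (free_at k))"

lemma run_Suc_eq:
  "run a pr S U0 (Suc k) = (if remaining k = {} then run a pr S U0 k
     else (start_time k + S (served k), remaining k - {served k},
           (recorded k)(served k := start_time k)))"
  unfolding remaining_def free_at_def recorded_def start_time_def served_def
  by (cases "run a pr S U0 k") (simp add: case_prod_beta)

lemma remaining_0 [simp]: "remaining 0 = U0"
  and free_at_0 [simp]: "free_at 0 = 0"
  by (simp_all add: remaining_def free_at_def)

lemma
  assumes "remaining k \<noteq> {}"
  shows remaining_Suc: "remaining (Suc k) = remaining k - {served k}"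
    and free_at_Suc: "free_at (Suc k) = start_time k + S (served k)"
    and recorded_Suc: "recorded (Suc k) = (recorded k)(served k := start_time k)"
  using assms unfolding remaining_def [of "Suc k"] free_at_def [of "Suc k"]
    recorded_def [of "Suc k"] run_Suc_eq by simp_all

lemma start_time_eq: "start_time k = max (free_at k) (Min (a ` remaining k))"
  by (simp add: start_time_def fst_next_service)

lemma remaining_Suc_subset: "remaining (Suc k) \<subseteq> remaining k"
  unfolding remaining_def [of "Suc k"] run_Suc_eq by (auto simp: remaining_def)

lemma remaining_antimono: "k \<le> k' \<Longrightarrow> remaining k' \<subseteq> remaining k"
  by (induction k' rule: dec_induct) (use remaining_Suc_subset in blast)+

lemma remaining_subset: "remaining k \<subseteq> U0"
  using remaining_antimono[of 0 k] by simp

lemma finite_remaining: "finite (remaining k)"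
  using finite_U0 remaining_subset finite_subset by blast

lemma served_next_in_line: "remaining k \<noteq> {} \<Longrightarrow> next_in_line (remaining k) (free_at k) (served k)"
  unfolding served_def using next_in_line_next_service remaining_subset by blast

lemma card_remaining: "k \<le> card U0 \<Longrightarrow> card (remaining k) = card U0 - k"
proof (induction k)
  case (Suc k)
  then have "remaining k \<noteq> {}" by auto
  then show ?case
    using Suc served_next_in_line[of k] finite_remaining[of k]
    by (simp add: remaining_Suc next_in_line_def)
qed simp

lemma remaining_nonempty: "k < card U0 \<Longrightarrow> remaining k \<noteq> {}"
  using card_remaining[of k] by auto

lemma remaining_card_U0: "remaining (card U0) = {}"
  using card_remaining[of "card U0"] finite_remaining[of "card U0"] by simp

context
  fixes k assumes k: "k < card U0"
begin

lemma served_in_remaining: "served k \<in> remaining k"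
  and served_arrived: "a (served k) \<le> start_time k"
  and served_first: "\<lbrakk>j \<in> remaining k; a j \<le> start_time k; j \<noteq> served k\<rbrakk> \<Longrightarrow> pr (served k) j"
  using served_next_in_line[OF remaining_nonempty[OF k]]
  by (simp_all add: next_in_line_def start_time_eq)

lemma service_served_nonneg: "0 \<le> S (served k)"
  using served_in_remaining remaining_subset service_nonneg by blast

end

lemma served_remaining: "\<lbrakk>k \<le> k'; k' < card U0\<rbrakk> \<Longrightarrow> served k' \<in> remaining k"
  using served_in_remaining remaining_antimono by blast

lemma served_inj: "\<lbrakk>k < card U0; k' < card U0; served k = served k'\<rbrakk> \<Longrightarrow> k = k'"
proof (induction k k' rule: linorder_wlog)
  case (le k k')
  show ?case
  proof (rule ccontr)
    assume "k \<noteq> k'"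
    then have "served k' \<in> remaining (Suc k)" using le served_remaining[of "Suc k" k'] by simp
    then show False using le remaining_nonempty by (simp add: remaining_Suc)
  qed
qed (simp add: eq_commute)

lemma served_surj:
  assumes "i \<in> U0"
  shows "\<exists>k<card U0. served k = i"
proof -
  define m where "m = (LEAST m. i \<notin> remaining m)"
  have last: "i \<notin> remaining (card U0)" by (simp add: remaining_card_U0)
  have m: "i \<notin> remaining m" "m \<le> card U0"
    unfolding m_def using last by (rule LeastI, rule Least_le)
  then obtain k where k: "m = Suc k" using assms by (cases m) auto
  then have i: "i \<in> remaining k" using not_less_Least[of k "\<lambda>m. i \<notin> remaining m"] m_def by auto
  then have "i = served k" using m(1) k remaining_Suc[of k] by auto
  moreover have "k < card U0" using m(2) k by simp
  ultimately show ?thesis by blast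
qed

lemma recorded_served:
  "\<lbrakk>k < m; m \<le> card U0\<rbrakk> \<Longrightarrow> recorded m (served k) = start_time k"
proof (induction m)
  case (Suc m)
  then have ne: "remaining m \<noteq> {}" using remaining_nonempty by simp
  show ?case
  proof (cases "k = m")
    case False
    then have "served m \<noteq> served k" using served_inj[of m k] Suc.prems by auto
    then show ?thesis using Suc False ne by (simp add: recorded_Suc)
  qed (simp add: ne recorded_Suc)
qed simp

lemma free_at_nonneg: "k \<le> card U0 \<Longrightarrow> 0 \<le> free_at k"
proof (induction k)
  case (Suc k)
  then have "k < card U0" by simp
  then show ?case
    using Suc.IH service_served_nonneg remaining_nonempty
    by (simp add: free_at_Suc start_time_eq)
qed simp

lemma start_time_nonneg: "k < card U0 \<Longrightarrow> 0 \<le> start_time k"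
  using free_at_nonneg[of k] by (simp add: start_time_eq)

lemma start_time_gap: "\<lbrakk>j < k; k < card U0\<rbrakk> \<Longrightarrow> start_time j + S (served j) \<le> start_time k"
proof (induction k)
  case (Suc k)
  have "start_time k + S (served k) \<le> start_time (Suc k)"
    using Suc.prems remaining_nonempty[of k] by (simp add: start_time_eq free_at_Suc)
  moreover have "0 \<le> S (served k)" using Suc.prems service_served_nonneg by simp
  ultimately show ?case using Suc by (cases "j = k") auto
qed simp

lemma start_time_mono: "\<lbrakk>j \<le> k; k < card U0\<rbrakk> \<Longrightarrow> start_time j \<le> start_time k"
  using start_time_gap[of j k] service_served_nonneg[of j] by (cases "j = k") auto

lemma served_before:
  assumes "k < card U0" "j < card U0" "served j \<noteq> served k"
    and "a (served j) \<le> a (served k)" "\<not> pr (served k) (served j)"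
  shows "j < k"
proof (rule ccontr)
  assume "\<not> j < k"
  then have "served j \<in> remaining k" using served_remaining assms by simp
  moreover have "a (served j) \<le> start_time k" using served_arrived[of k] assms by simp
  ultimately show False using served_first[of k "served j"] assms by simp
qed

end

section \<open>Comparing two queues\<close>

lemma Min_image_mono:
  fixes f g :: "'a \<Rightarrow> 'b::linorder"
  assumes "finite U" "U \<noteq> {}" "\<And>i. i \<in> U \<Longrightarrow> f i \<le> g i"
  shows "Min (f ` U) \<le> Min (g ` U)"
proof -
  have "Min (g ` U) \<in> g ` U" using assms(1,2) by simp
  then obtain i where i: "i \<in> U" "Min (g ` U) = g i" by auto
  then have "Min (f ` U) \<le> f i" using assms(1) by simp
  also have "\<dots> \<le> g i" using assms(3) i(1) .
  finally show ?thesis using i(2) by simp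
qed

locale queue_comparison =
  A: priority_queue aA pA S U0 + B: priority_queue aB pB S U0
  for aA pA aB pB S U0 +
  fixes g :: cust
  assumes g_in: "g \<in> U0"
    and same_arrivals: "\<lbrakk>i \<in> U0; i \<noteq> g\<rbrakk> \<Longrightarrow> aA i = aB i"
    and g_earlier: "aA g \<le> aB g"
    and same_priorities: "\<lbrakk>i \<in> U0; j \<in> U0; i \<noteq> g; j \<noteq> g\<rbrakk> \<Longrightarrow> pA i j = pB i j"
    and g_priority_mono: "\<lbrakk>i \<in> U0; i \<noteq> g; pA i g\<rbrakk> \<Longrightarrow> pB i g"
begin

lemma arrival_le: "i \<in> U0 \<Longrightarrow> aA i \<le> aB i"
  using same_arrivals g_earlier by (cases "i = g") auto

lemma start_time_le_if_same_run:
  assumes "k < card U0" "run aA pA S U0 k = run aB pB S U0 k"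
  shows "A.start_time k \<le> B.start_time k"
proof -
  have "A.remaining k \<noteq> {}" "A.remaining k \<subseteq> U0" "finite (A.remaining k)"
    using assms(1) A.remaining_nonempty A.remaining_subset A.finite_remaining by auto
  then have "Min (aA ` A.remaining k) \<le> Min (aB ` A.remaining k)"
    using arrival_le by (intro Min_image_mono) auto
  then show ?thesis using assms(2)
    by (simp add: A.start_time_eq B.start_time_eq A.remaining_def B.remaining_def
        A.free_at_def B.free_at_def max.mono)
qed

context
  fixes kA k
  assumes kA: "kA < card U0" "A.served kA = g" and k: "k < kA"
    and same_run: "run aA pA S U0 k = run aB pB S U0 k"
begin

lemma same_start_time_before_tagged: "A.start_time k = B.start_time k"
proof -
  have kN: "k < card U0" using k kA by simp
  have "A.served k \<noteq> g" using A.served_inj[of k kA] k kA by auto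
  then have "aB (A.served k) \<le> A.start_time k"
    using A.served_arrived[OF kN] same_arrivals A.served_in_remaining[OF kN] A.remaining_subset
    by fastforce
  moreover have "A.served k \<in> B.remaining k" "A.free_at k = B.free_at k"
    using A.served_in_remaining[OF kN] same_run
    by (simp_all add: A.remaining_def B.remaining_def A.free_at_def B.free_at_def)
  moreover have "A.free_at k \<le> A.start_time k" by (simp add: A.start_time_eq)
  ultimately have "Min (aB ` B.remaining k) \<le> A.start_time k" "B.free_at k \<le> A.start_time k"
    using B.finite_remaining[of k] by (auto intro: order_trans[OF Min_le])
  then have "B.start_time k \<le> A.start_time k" by (simp add: B.start_time_eq)
  then show ?thesis using start_time_le_if_same_run[OF kN same_run] by simp
qed

lemma same_served_before_tagged: "A.served k = B.served k \<and> B.served k \<noteq> g"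
proof -
  have kN: "k < card U0" using k kA by simp
  define i where "i = A.served k"
  define j where "j = B.served k"
  have i_ne_g: "i \<noteq> g" using A.served_inj[of k kA] k kA by (auto simp: i_def)
  have g_waiting: "g \<in> A.remaining k" using A.served_remaining[of k kA] k kA by simp
  have same_remaining: "A.remaining k = B.remaining k"
    using same_run by (simp add: A.remaining_def B.remaining_def)
  have i_waiting: "i \<in> B.remaining k" and j_waiting: "j \<in> A.remaining k"
    using A.served_in_remaining[OF kN] B.served_in_remaining[OF kN] same_remaining
    by (simp_all add: i_def j_def)
  have in_U0: "i \<in> U0" "j \<in> U0" "g \<in> U0"
    using i_waiting j_waiting A.remaining_subset B.remaining_subset g_in by auto
  have same_start: "A.start_time k = B.start_time k" by (rule same_start_time_before_tagged)
  have arr_i: "aB i \<le> A.start_time k"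
    using A.served_arrived[OF kN] same_arrivals[OF in_U0(1) i_ne_g] by (simp add: i_def)
  have j_ne_g: "j \<noteq> g"
  proof
    assume "j = g"
    then have "aA g \<le> A.start_time k"
      using B.served_arrived[OF kN] g_earlier same_start by (simp add: j_def)
    then have "pB i g"
      using A.served_first[OF kN g_waiting] i_ne_g g_priority_mono in_U0 by (simp add: i_def)
    moreover have "pB g i"
      using B.served_first[OF kN i_waiting] arr_i same_start \<open>j = g\<close> i_ne_g by (simp add: j_def)
    ultimately show False using B.pr_asym in_U0 by blast
  qed
  have "i = j"
  proof (rule ccontr)
    assume "i \<noteq> j"
    have "aA j \<le> A.start_time k"
      using B.served_arrived[OF kN] same_arrivals[OF in_U0(2) j_ne_g] same_start
      by (simp add: j_def)
    then have "pB i j"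
      using A.served_first[OF kN j_waiting] \<open>i \<noteq> j\<close> same_priorities in_U0 i_ne_g j_ne_g
      by (simp add: i_def)
    moreover have "pB j i"
      using B.served_first[OF kN i_waiting] arr_i same_start \<open>i \<noteq> j\<close> by (simp add: j_def)
    ultimately show False using B.pr_asym in_U0 by blast
  qed
  then show ?thesis using j_ne_g by (simp add: i_def j_def)
qed

end

lemma runs_agree_before_tagged:
  assumes "kA < card U0" "A.served kA = g"
  shows "k \<le> kA \<Longrightarrow> run aA pA S U0 k = run aB pB S U0 k
    \<and> (\<forall>j<k. A.start_time j = B.start_time j \<and> A.served j = B.served j \<and> B.served j \<noteq> g)"
proof (induction k)
  case (Suc k)
  then have k: "k < kA" and same_run: "run aA pA S U0 k = run aB pB S U0 k" by auto
  have "A.remaining k \<noteq> {}" "B.remaining k \<noteq> {}"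
    using k assms(1) A.remaining_nonempty B.remaining_nonempty by simp_all
  moreover have "A.remaining k = B.remaining k" "A.recorded k = B.recorded k"
    using same_run by (simp_all add: A.remaining_def B.remaining_def A.recorded_def B.recorded_def)
  moreover note step = same_start_time_before_tagged[OF assms k same_run]
    same_served_before_tagged[OF assms k same_run]
  ultimately have "run aA pA S U0 (Suc k) = run aB pB S U0 (Suc k)"
    unfolding A.run_Suc_eq B.run_Suc_eq by simp
  then show ?case using Suc k step by (auto simp: less_Suc_eq)
qed simp

context
  fixes kA kB
  assumes kA: "kA < card U0" "A.served kA = g" and kB: "kB < card U0" "B.served kB = g"
begin

lemma tagged_served_no_later: "kA \<le> kB"
  using runs_agree_before_tagged[OF kA order_refl] kB(2) not_le by blast

lemma tagged_start_le: "A.start_time kA \<le> B.start_time kB"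
proof -
  have "A.start_time kA \<le> B.start_time kA"
    using start_time_le_if_same_run kA runs_agree_before_tagged[OF kA order_refl] by blast
  also have "\<dots> \<le> B.start_time kB" using B.start_time_mono tagged_served_no_later kB by blast
  finally show ?thesis .
qed

lemma tagged_start_delayed:
  assumes i: "i \<in> U0" "i \<noteq> g" "pB i g" "pA g i" "aB i \<le> aB g" "aA g \<le> aB i"
  shows "A.start_time kA + S i \<le> B.start_time kB"
proof -
  have agree: "\<forall>j<kA. A.start_time j = B.start_time j \<and> A.served j = B.served j"
    using runs_agree_before_tagged[OF kA order_refl] by blast
  obtain j where j: "j < card U0" "B.served j = i" using B.served_surj[OF i(1)] by blast
  have "\<not> pB g i" using B.pr_asym i g_in by blast
  then have j_kB: "j < kB" using B.served_before[OF kB(1) j(1)] i kB(2) j(2) by simp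
  have kA_j: "kA \<le> j"
  proof (rule ccontr)
    assume "\<not> kA \<le> j"
    then have "A.served j = i" "aA g \<le> A.start_time j"
      using agree j B.served_arrived[OF j(1)] i(6) by auto
    moreover have "g \<in> A.remaining j" using A.served_remaining[of j kA] kA \<open>\<not> kA \<le> j\<close> by simp
    ultimately have "pA i g" using A.served_first[of j g] j(1) kA \<open>\<not> kA \<le> j\<close> i(2) by simp
    then show False using A.pr_asym i g_in by blast
  qed
  have "A.start_time kA \<le> B.start_time kA"
    using start_time_le_if_same_run kA runs_agree_before_tagged[OF kA order_refl] by blast
  also have "\<dots> \<le> B.start_time j" using B.start_time_mono kA_j j(1) by blast
  finally show ?thesis using B.start_time_gap[OF j_kB kB(1)] j(2) by simp
qed

end

end

section \<open>The walk-in queue\<close>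

definition walkins :: "real \<Rightarrow> nat \<Rightarrow> (nat \<Rightarrow> real) \<Rightarrow> nat \<Rightarrow> real" where
  "walkins t n x = (\<lambda>i. if i = n then t else x i)"

locale walkin_queue =
  fixes tau :: "real list" and t :: real and n :: nat and x :: "nat \<Rightarrow> real"
    and rk :: "nat \<Rightarrow> nat" and S :: "cust \<Rightarrow> real"
  assumes sorted_tau: "sorted_wrt (<) tau"
    and ranks_permute: "rk permutes {..n}"
    and service_times_nonneg: "\<forall>i\<in>customers (length tau) n. 0 \<le> S i"

sublocale walkin_queue \<subseteq> priority_queue "arr tau (walkins t n x)" "prec tau (walkins t n x) rk"
  S "customers (length tau) n"
proof
  show "finite (customers (length tau) n)" by (simp add: customers_def)
next
  fix i j assume ij: "i \<in> customers (length tau) n" "j \<in> customers (length tau) n" "i \<noteq> j"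
  show "prec tau (walkins t n x) rk i j \<or> prec tau (walkins t n x) rk j i"
  proof (cases i; cases j)
    fix l m assume "i = Inl l" "j = Inl m"
    then show ?thesis
      using ij sorted_wrt_nth_less[OF sorted_tau, of l m] sorted_wrt_nth_less[OF sorted_tau, of m l]
      by (cases "l < m") (auto simp: prec_def customers_def)
  next
    fix l m assume "i = Inr l" "j = Inr m"
    moreover have "inj_on rk {..n}" using ranks_permute permutes_inj_on by blast
    ultimately have "rk l \<noteq> rk m" using ij by (auto simp: customers_def inj_on_def)
    then show ?thesis using \<open>i = Inr l\<close> \<open>j = Inr m\<close> by (auto simp: prec_def)
  qed (simp_all add: prec_def)
next
  fix i j assume "prec tau (walkins t n x) rk i j"
  then show "\<not> prec tau (walkins t n x) rk j i" by (auto simp: prec_def split: sum.splits)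
next
  fix i j k assume "prec tau (walkins t n x) rk i j" "prec tau (walkins t n x) rk j k"
  then show "prec tau (walkins t n x) rk i k" by (auto simp: prec_def split: sum.splits)
qed (use service_times_nonneg in blast)

context walkin_queue
begin

lemma tagged_in_customers: "Inr n \<in> customers (length tau) n"
  by (simp add: customers_def)

lemma tagged_wait_eq_start_time:
  obtains k where "k < card (customers (length tau) n)" "served k = Inr n"
    "tagged_wait tau t n x rk S = start_time k - t"
proof -
  obtain k where k: "k < card (customers (length tau) n)" "served k = Inr n"
    using served_surj[OF tagged_in_customers] by blast
  have "tagged_wait tau t n x rk S = recorded (card (customers (length tau) n)) (Inr n) - t"
    unfolding tagged_wait_def Let_def recorded_def by (simp add: walkins_def)
  also have "\<dots> = start_time k - t" using recorded_served[OF k(1)] k(2) by simp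
  finally show thesis using that k by blast
qed

lemma tagged_wait_nonneg: "0 \<le> tagged_wait tau t n x rk S"
proof -
  obtain k where "k < card (customers (length tau) n)" "served k = Inr n"
    "tagged_wait tau t n x rk S = start_time k - t"
    by (rule tagged_wait_eq_start_time)
  then show ?thesis using served_arrived[of k] by (simp add: arr_def walkins_def)
qed

lemma tagged_wait_eq_0:
  assumes "t = 0" "0 < tau ! 0" "\<forall>i<n. 0 < x i"
  shows "tagged_wait tau t n x rk S = 0"
proof -
  let ?a = "arr tau (walkins t n x)" and ?U0 = "customers (length tau) n"
  have later: "0 < ?a j" if "j \<in> ?U0" "j \<noteq> Inr n" for j
  proof (cases j)
    case (Inl l)
    then have "l < length tau" using that by (auto simp: customers_def)
    then have "tau ! 0 \<le> tau ! l" using sorted_wrt_nth_less[OF sorted_tau, of 0 l] by (cases l) auto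
    then show ?thesis using assms(2) Inl by (simp add: arr_def)
  next
    case (Inr l)
    then show ?thesis using that assms(3) by (auto simp: arr_def walkins_def customers_def)
  qed
  have tagged_arr: "?a (Inr n) = 0" using assms(1) by (simp add: arr_def walkins_def)
  have "Min (?a ` ?U0) = 0"
    using later tagged_arr tagged_in_customers finite_U0
    by (intro Min_eqI) (auto, metis less_eq_real_def)
  then have "next_in_line ?U0 0 (Inr n)"
    using later tagged_arr tagged_in_customers by (auto simp: next_in_line_def) (meson leD later)
  then have "served 0 = Inr n" "start_time 0 = 0"
    using snd_next_service_eqI[of ?U0] \<open>Min (?a ` ?U0) = 0\<close>
    by (simp_all add: served_def start_time_eq)
  moreover have "0 < card ?U0" using tagged_in_customers finite_U0 card_gt_0_iff by blast
  ultimately show ?thesis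
    using served_inj tagged_wait_eq_start_time assms(1) by (metis diff_self)
qed

lemma tagged_wait_ge_earlier_service:
  assumes "1 \<le> n" "x 0 \<le> t" "x 0 = t \<Longrightarrow> rk 0 < rk n"
  shows "S (Inr 0) - t \<le> tagged_wait tau t n x rk S"
proof -
  obtain k where k: "k < card (customers (length tau) n)" "served k = Inr n"
    "tagged_wait tau t n x rk S = start_time k - t"
    by (rule tagged_wait_eq_start_time)
  obtain j where j: "j < card (customers (length tau) n)" "served j = Inr 0"
    using served_surj[of "Inr 0"] by (auto simp: customers_def)
  have "\<not> prec tau (walkins t n x) rk (Inr n) (Inr 0)" "arr tau (walkins t n x) (Inr 0) \<le> t"
    using assms by (auto simp: arr_def walkins_def prec_def)
  then have "j < k"
    using served_before[OF k(1) j(1)] j(2) k(2) assms(1) by (simp add: arr_def walkins_def)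
  then have "start_time j + S (Inr 0) \<le> start_time k" using start_time_gap k(1) j(2) by force
  then show ?thesis using start_time_nonneg[OF j(1)] k(3) by simp
qed

end

definition tie_delay :: "real \<Rightarrow> nat \<Rightarrow> (nat \<Rightarrow> real) \<Rightarrow> (nat \<Rightarrow> nat) \<Rightarrow> (cust \<Rightarrow> real) \<Rightarrow> real"
  where "tie_delay t n x rk S = (if 1 \<le> n \<and> x 0 = t \<and> rk 0 < rk n then S (Inr 0) else 0)"

lemma tagged_wait_earlier_le:
  assumes "sorted_wrt (<) tau" "rk permutes {..n}" "\<forall>i\<in>customers (length tau) n. 0 \<le> S i"
    and "t' < t"
  shows "tagged_wait tau t' n x rk S + tie_delay t n x rk S \<le> tagged_wait tau t n x rk S + (t - t')"
proof -
  interpret A: walkin_queue tau t' n x rk S using assms by unfold_locales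
  interpret B: walkin_queue tau t n x rk S using assms by unfold_locales
  interpret queue_comparison "arr tau (walkins t' n x)" "prec tau (walkins t' n x) rk"
    "arr tau (walkins t n x)" "prec tau (walkins t n x) rk" S "customers (length tau) n" "Inr n"
    using \<open>t' < t\<close> A.tagged_in_customers
    by unfold_locales (auto simp: arr_def walkins_def prec_def split: sum.splits)
  obtain kA where kA: "kA < card (customers (length tau) n)" "A.served kA = Inr n"
    "tagged_wait tau t' n x rk S = A.start_time kA - t'"
    by (rule A.tagged_wait_eq_start_time)
  obtain kB where kB: "kB < card (customers (length tau) n)" "B.served kB = Inr n"
    "tagged_wait tau t n x rk S = B.start_time kB - t"
    by (rule B.tagged_wait_eq_start_time)
  show ?thesis
  proof (cases "1 \<le> n \<and> x 0 = t \<and> rk 0 < rk n")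
    case True
    then have "A.start_time kA + S (Inr 0) \<le> B.start_time kB"
      using \<open>t' < t\<close>
      by (intro tagged_start_delayed[OF kA(1,2) kB(1,2)])
        (auto simp: customers_def arr_def walkins_def prec_def)
    then show ?thesis using True kA(3) kB(3) by (simp add: tie_delay_def)
  next
    case False
    show ?thesis
      unfolding tie_delay_def if_not_P[OF False]
      using tagged_start_le[OF kA(1,2) kB(1,2)] kA(3) kB(3) by simp
  qed
qed

section \<open>Expectations over arrival scenarios\<close>

lemma prob_space_exp_service: "0 < mu \<Longrightarrow> prob_space (exp_service mu)"
  unfolding exp_service_def by (rule prob_space_exponential_density)

lemma measurable_exp_service [simp]: "measurable (exp_service mu) N = measurable borel N"
  unfolding exp_service_def by (intro measurable_cong_sets) simp_all

lemma AE_exp_service_nonneg: "0 < mu \<Longrightarrow> AE s in exp_service mu. 0 \<le> s"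
  unfolding exp_service_def
  by (subst AE_density) (auto intro!: AE_I2 simp: exponential_density_def)

lemma nn_integral_exp_service_excess_pos:
  assumes "0 \<le> m" "0 < mu"
  shows "0 < (\<integral>\<^sup>+ s. ennreal (s - m) \<partial>exp_service mu)"
proof -
  define c where "c = mu * exp (- (m + 2) * mu)"
  have "ennreal c * indicator {m+1..m+2} s \<le> ennreal (exponential_density mu s * (s - m))" for s
  proof (cases "s \<in> {m+1..m+2}")
    case True
    then have s: "m + 1 \<le> s" "s \<le> m + 2" by auto
    have "- (m + 2) * mu \<le> - s * mu" using s assms(2) by (intro mult_right_mono) auto
    then have "c \<le> mu * exp (- s * mu)" using assms(2) by (simp add: c_def)
    also have "\<dots> \<le> mu * exp (- s * mu) * (s - m)" using s assms(2) by simp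
    finally show ?thesis using True s assms(1) by (simp add: exponential_density_def ennreal_leI)
  qed simp
  then have "ennreal c * emeasure lborel {m+1..m+2}
      \<le> (\<integral>\<^sup>+ s. ennreal (exponential_density mu s * (s - m)) \<partial>lborel)"
    by (subst nn_integral_cmult_indicator[symmetric]) (auto intro: nn_integral_mono)
  also have "\<dots> = (\<integral>\<^sup>+ s. ennreal (s - m) \<partial>exp_service mu)"
    unfolding exp_service_def using assms(2)
    by (subst nn_integral_density) (auto simp: ennreal_mult' exponential_density_def)
  finally have "ennreal c * emeasure lborel {m+1..m+2} \<le> (\<integral>\<^sup>+ s. ennreal (s - m) \<partial>exp_service mu)" .
  moreover have "0 < ennreal c * emeasure lborel {m+1..m+2}" using assms(2) by (simp add: c_def)
  ultimately show ?thesis by order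
qed

definition service_measure :: "real list \<Rightarrow> real \<Rightarrow> nat \<Rightarrow> (cust \<Rightarrow> real) measure" where
  "service_measure tau mu n = PiM (customers (length tau) n) (\<lambda>_. exp_service mu)"

definition rank_measure :: "nat \<Rightarrow> (nat \<Rightarrow> nat) measure" where
  "rank_measure n = measure_pmf (pmf_of_set {rk. rk permutes {..n}})"

definition arrival_measure :: "real measure \<Rightarrow> nat \<Rightarrow> (nat \<Rightarrow> real) measure" where
  "arrival_measure P n = PiM {..<n} (\<lambda>_. P)"

definition scenario_integral :: "real list \<Rightarrow> real \<Rightarrow> real measure \<Rightarrow> nat
    \<Rightarrow> ((nat \<Rightarrow> real) \<Rightarrow> (nat \<Rightarrow> nat) \<Rightarrow> (cust \<Rightarrow> real) \<Rightarrow> ennreal) \<Rightarrow> ennreal" where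
  "scenario_integral tau mu P n F =
     (\<integral>\<^sup>+ x. (\<integral>\<^sup>+ rk. (\<integral>\<^sup>+ S. F x rk S \<partial>service_measure tau mu n) \<partial>rank_measure n)
       \<partial>arrival_measure P n)"

definition scenario_mean :: "real list \<Rightarrow> real \<Rightarrow> real \<Rightarrow> real measure
    \<Rightarrow> (nat \<Rightarrow> (nat \<Rightarrow> real) \<Rightarrow> (nat \<Rightarrow> nat) \<Rightarrow> (cust \<Rightarrow> real) \<Rightarrow> ennreal) \<Rightarrow> ennreal" where
  "scenario_mean tau mu lam P f =
     (\<Sum>n. ennreal (pmf (poisson_pmf lam) n) * scenario_integral tau mu P n (f n))"

lemma exp_wait_eq_scenario_mean:
  "exp_wait tau mu lam P t
    = scenario_mean tau mu lam P (\<lambda>n x rk S. ennreal (tagged_wait tau t n x rk S))"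
  by (simp add: exp_wait_def scenario_mean_def scenario_integral_def service_measure_def
      rank_measure_def arrival_measure_def)

lemma prob_space_service_measure: "0 < mu \<Longrightarrow> prob_space (service_measure tau mu n)"
  unfolding service_measure_def by (intro prob_space_PiM prob_space_exp_service)

lemma AE_service_measure_nonneg:
  "0 < mu \<Longrightarrow> AE S in service_measure tau mu n. \<forall>i\<in>customers (length tau) n. 0 \<le> S i"
  unfolding service_measure_def
  by (intro AE_PiM_all_components prob_space_exp_service AE_exp_service_nonneg)
    (auto simp: customers_def)

lemma nn_integral_service_measure_walkin_0:
  assumes "0 < mu" "f \<in> borel_measurable borel" "1 \<le> n"
  shows "(\<integral>\<^sup>+ S. f (S (Inr 0)) \<partial>service_measure tau mu n) = (\<integral>\<^sup>+ s. f s \<partial>exp_service mu)"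
  unfolding service_measure_def using assms prob_space_exp_service
  by (intro nn_integral_PiM_component) (auto simp: customers_def exp_service_def)

lemma permutations_atMost_finite_nonempty:
  "finite {rk. rk permutes {..(n::nat)}}" "{rk. rk permutes {..n}} \<noteq> {}"
  using finite_permutations[of "{..n}"] permutes_id[of "{..n}"] by blast+

lemma prob_space_rank_measure: "prob_space (rank_measure n)"
  by (simp add: rank_measure_def measure_pmf.prob_space_axioms)

lemma AE_rank_measure_permutes: "AE rk in rank_measure n. rk permutes {..n}"
  unfolding rank_measure_def using permutations_atMost_finite_nonempty[of n]
  by (simp add: AE_measure_pmf_iff)

lemma emeasure_rank_measure_id_pos: "0 < emeasure (rank_measure n) {id}"
  unfolding rank_measure_def using permutations_atMost_finite_nonempty[of n] permutes_id[of "{..n}"]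
  by (simp add: emeasure_pmf_single card_gt_0_iff)

lemma prob_space_arrival_measure: "prob_space P \<Longrightarrow> prob_space (arrival_measure P n)"
  unfolding arrival_measure_def by (rule prob_space_PiM)

lemma AE_arrival_measure:
  "\<lbrakk>prob_space P; AE y in P. Q y\<rbrakk> \<Longrightarrow> AE x in arrival_measure P n. \<forall>i<n. Q (x i)"
  unfolding arrival_measure_def using AE_PiM_all_components[of "{..<n}" "\<lambda>_. P" Q]
  by (auto elim: eventually_mono)

context
  fixes tau :: "real list" and mu :: real and P :: "real measure"
  assumes mu: "0 < mu" and P: "prob_space P"
begin

lemma scenario_integral_mono:
  assumes "AE y in P. Q y"
    and "\<And>x rk S. \<lbrakk>rk permutes {..n}; \<forall>i\<in>customers (length tau) n. 0 \<le> S i; \<forall>i<n. Q (x i)\<rbrakk>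
      \<Longrightarrow> F x rk S \<le> G x rk S"
  shows "scenario_integral tau mu P n F \<le> scenario_integral tau mu P n G"
proof -
  let ?MS = "service_measure tau mu n" and ?MR = "rank_measure n"
  have service: "(\<integral>\<^sup>+ S. F x rk S \<partial>?MS) \<le> (\<integral>\<^sup>+ S. G x rk S \<partial>?MS)"
    if "rk permutes {..n}" "\<forall>i<n. Q (x i)" for x rk
    using AE_service_measure_nonneg[OF mu, of tau n] assms(2)[OF that(1) _ that(2)]
    by (intro nn_integral_mono_AE) (auto elim: eventually_mono)
  have "(\<integral>\<^sup>+ rk. \<integral>\<^sup>+ S. F x rk S \<partial>?MS \<partial>?MR) \<le> (\<integral>\<^sup>+ rk. \<integral>\<^sup>+ S. G x rk S \<partial>?MS \<partial>?MR)"
    if "\<forall>i<n. Q (x i)" for x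
    using AE_rank_measure_permutes[of n] service[OF _ that]
    by (intro nn_integral_mono_AE) (auto elim: eventually_mono)
  then show ?thesis unfolding scenario_integral_def
    using AE_arrival_measure[OF P assms(1), of n]
    by (intro nn_integral_mono_AE) (auto elim: eventually_mono)
qed

lemma scenario_integral_add_le:
  assumes "c \<noteq> \<infinity>"
    and "\<And>x rk S. \<lbrakk>rk permutes {..n}; \<forall>i\<in>customers (length tau) n. 0 \<le> S i\<rbrakk>
      \<Longrightarrow> F x rk S + G x rk S \<le> H x rk S + c"
  shows "scenario_integral tau mu P n F + scenario_integral tau mu P n G
    \<le> scenario_integral tau mu P n H + c"
proof -
  let ?MS = "service_measure tau mu n" and ?MR = "rank_measure n"
  have service: "(\<integral>\<^sup>+ S. F x rk S \<partial>?MS) + (\<integral>\<^sup>+ S. G x rk S \<partial>?MS) \<le> (\<integral>\<^sup>+ S. H x rk S \<partial>?MS) + c"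
    if "rk permutes {..n}" for x rk
    using AE_service_measure_nonneg[OF mu, of tau n] assms(2)[OF that]
    by (intro prob_space.nn_integral_add_le_add_const[OF prob_space_service_measure[OF mu] _
          assms(1)])
      (auto elim: eventually_mono)
  have "(\<integral>\<^sup>+ rk. \<integral>\<^sup>+ S. F x rk S \<partial>?MS \<partial>?MR) + (\<integral>\<^sup>+ rk. \<integral>\<^sup>+ S. G x rk S \<partial>?MS \<partial>?MR)
      \<le> (\<integral>\<^sup>+ rk. \<integral>\<^sup>+ S. H x rk S \<partial>?MS \<partial>?MR) + c" for x
    using AE_rank_measure_permutes[of n] service
    by (intro prob_space.nn_integral_add_le_add_const[OF prob_space_rank_measure _ assms(1)])
      (auto elim: eventually_mono)
  then show ?thesis unfolding scenario_integral_def
    by (intro prob_space.nn_integral_add_le_add_const[OF prob_space_arrival_measure[OF P] _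
          assms(1)])
      simp
qed

text \<open>With one other walk-in, the ranking id puts walk-in 0 ahead of the tagged walk-in 1
  when they arrive together.\<close>

lemma scenario_integral_one_walkin_pos:
  assumes "A \<in> sets borel" "0 < emeasure P A" "0 \<le> m" "sets P = sets borel"
    and "\<And>x S. \<lbrakk>\<forall>i\<in>customers (length tau) 1. 0 \<le> S i; x 0 \<in> A\<rbrakk>
      \<Longrightarrow> ennreal (S (Inr 0) - m) \<le> F x id S"
  shows "0 < scenario_integral tau mu P 1 F"
proof -
  define K where "K = (\<integral>\<^sup>+ s. ennreal (s - m) \<partial>exp_service mu)"
  define \<rho> where "\<rho> = emeasure (rank_measure 1) {id}"
  define L where "L x rk S = ennreal (S (Inr 0) - m) * (indicator A (x 0) * indicator {id} rk)"
    for x :: "nat \<Rightarrow> real" and rk :: "nat \<Rightarrow> nat" and S :: "cust \<Rightarrow> real"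
  have ranks: "(\<integral>\<^sup>+ rk. K * indicator A (x 0) * indicator {id} rk \<partial>rank_measure 1)
      = K * \<rho> * indicator A (x 0)" for x :: "nat \<Rightarrow> real"
    unfolding \<rho>_def by (subst nn_integral_cmult_indicator) (simp_all add: rank_measure_def mult_ac)
  have "scenario_integral tau mu P 1 L
      = (\<integral>\<^sup>+ x. (\<integral>\<^sup>+ rk. K * indicator A (x 0) * indicator {id} rk \<partial>rank_measure 1)
          \<partial>arrival_measure P 1)"
    unfolding scenario_integral_def K_def L_def using mu
    by (simp add: nn_integral_service_measure_walkin_0[where f = "\<lambda>s. ennreal (s - m) * _"]
        nn_integral_multc mult.assoc)
  also have "\<dots> = (\<integral>\<^sup>+ x. K * \<rho> * indicator A (x 0) \<partial>arrival_measure P 1)"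
    by (simp only: ranks)
  also have "\<dots> = (\<integral>\<^sup>+ y. K * \<rho> * indicator A y \<partial>P)"
    unfolding arrival_measure_def using P assms(1,4)
    by (intro nn_integral_PiM_component) (auto simp: measurable_cong_sets[of P borel])
  also have "\<dots> = K * \<rho> * emeasure P A"
    using assms(1,4) by (simp add: nn_integral_cmult_indicator)
  finally have "scenario_integral tau mu P 1 L = K * \<rho> * emeasure P A" .
  moreover have "scenario_integral tau mu P 1 L \<le> scenario_integral tau mu P 1 F"
    using assms(5) by (intro scenario_integral_mono[of "\<lambda>_. True"]) (auto simp: L_def indicator_def)
  moreover have "0 < K * \<rho> * emeasure P A"
    using nn_integral_exp_service_excess_pos[OF assms(3) mu] emeasure_rank_measure_id_pos assms(2)
    by (simp add: K_def \<rho>_def ennreal_zero_less_mult_iff)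
  ultimately show ?thesis by order
qed

end

lemma scenario_mean_add_le:
  assumes "0 < mu" "prob_space P" "c \<noteq> \<infinity>"
    and "\<And>n x rk S. \<lbrakk>rk permutes {..n}; \<forall>i\<in>customers (length tau) n. 0 \<le> S i\<rbrakk>
      \<Longrightarrow> f n x rk S + g n x rk S \<le> h n x rk S + c"
  shows "scenario_mean tau mu lam P f + scenario_mean tau mu lam P g
    \<le> scenario_mean tau mu lam P h + c"
proof -
  let ?p = "\<lambda>n. ennreal (pmf (poisson_pmf lam) n)"
    and ?I = "\<lambda>f n. scenario_integral tau mu P n (f n)"
  have "scenario_mean tau mu lam P f + scenario_mean tau mu lam P g
      = (\<Sum>n. ?p n * ?I f n + ?p n * ?I g n)"
    unfolding scenario_mean_def by (rule suminf_add[OF summableI summableI])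
  also have "\<dots> \<le> (\<Sum>n. ?p n * ?I h n + ?p n * c)"
  proof (intro suminf_le summableI)
    fix n
    have "?I f n + ?I g n \<le> ?I h n + c"
      using assms by (intro scenario_integral_add_le) auto
    then show "?p n * ?I f n + ?p n * ?I g n \<le> ?p n * ?I h n + ?p n * c"
      by (simp add: distrib_left[symmetric] mult_left_mono)
  qed
  also have "\<dots> = scenario_mean tau mu lam P h + (\<Sum>n. ?p n * c)"
    unfolding scenario_mean_def by (rule suminf_add[OF summableI summableI, symmetric])
  also have "(\<Sum>n. ?p n * c) = c" by (simp add: ennreal_suminf_multc suminf_ennreal_pmf)
  finally show ?thesis .
qed

lemma scenario_mean_eq_0:
  assumes "0 < mu" "prob_space P" "AE y in P. Q y"
    and "\<And>n x rk S. \<lbrakk>rk permutes {..n}; \<forall>i\<in>customers (length tau) n. 0 \<le> S i; \<forall>i<n. Q (x i)\<rbrakk>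
      \<Longrightarrow> f n x rk S = 0"
  shows "scenario_mean tau mu lam P f = 0"
proof -
  have "scenario_integral tau mu P n (f n) \<le> scenario_integral tau mu P n (\<lambda>_ _ _. 0)" for n
    using assms by (intro scenario_integral_mono[of mu P Q]) auto
  then show ?thesis by (simp add: scenario_mean_def scenario_integral_def)
qed

lemma scenario_mean_pos:
  assumes "0 < mu" "0 < lam" "real_distribution P" "A \<in> sets borel" "0 < emeasure P A" "0 \<le> m"
    and "\<And>x S. \<lbrakk>\<forall>i\<in>customers (length tau) 1. 0 \<le> S i; x 0 \<in> A\<rbrakk>
      \<Longrightarrow> ennreal (S (Inr 0) - m) \<le> f 1 x id S"
  shows "0 < scenario_mean tau mu lam P f"
proof -
  interpret real_distribution P by fact
  let ?g = "\<lambda>n. ennreal (pmf (poisson_pmf lam) n) * scenario_integral tau mu P n (f n)"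
  have "0 < ?g 1"
    using scenario_integral_one_walkin_pos[OF assms(1) prob_space_axioms assms(4,5,6)] assms(2,7)
    by (simp add: ennreal_zero_less_mult_iff)
  also have "\<dots> \<le> scenario_mean tau mu lam P f"
    unfolding scenario_mean_def using sum_le_suminf[OF summableI, of "{1}" ?g] by simp
  finally show ?thesis .
qed

lemma exp_wait_earlier_le:
  assumes "sorted_wrt (<) tau" "0 < mu" "prob_space P" "t' < t"
  shows "exp_wait tau mu lam P t'
      + scenario_mean tau mu lam P (\<lambda>n x rk S. ennreal (tie_delay t n x rk S))
    \<le> exp_wait tau mu lam P t + ennreal (t - t')"
  unfolding exp_wait_eq_scenario_mean
proof (rule scenario_mean_add_le[OF assms(2,3)])
  fix n :: nat and x :: "nat \<Rightarrow> real" and rk :: "nat \<Rightarrow> nat" and S :: "cust \<Rightarrow> real"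
  assume rk: "rk permutes {..n}" and S: "\<forall>i\<in>customers (length tau) n. 0 \<le> S i"
  interpret A: walkin_queue tau t' n x rk S using assms(1) rk S by unfold_locales
  interpret B: walkin_queue tau t n x rk S using assms(1) rk S by unfold_locales
  have "0 \<le> tie_delay t n x rk S" using S by (auto simp: tie_delay_def customers_def)
  then have "ennreal (tagged_wait tau t' n x rk S) + ennreal (tie_delay t n x rk S)
      = ennreal (tagged_wait tau t' n x rk S + tie_delay t n x rk S)"
    using A.tagged_wait_nonneg by (simp add: ennreal_plus)
  also have "\<dots> \<le> ennreal (tagged_wait tau t n x rk S + (t - t'))"
    using tagged_wait_earlier_le[OF assms(1) rk S assms(4)] by (rule ennreal_leI)
  also have "\<dots> = ennreal (tagged_wait tau t n x rk S) + ennreal (t - t')"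
    using B.tagged_wait_nonneg assms(4) by (simp add: ennreal_plus)
  finally show "ennreal (tagged_wait tau t' n x rk S) + ennreal (tie_delay t n x rk S)
      \<le> ennreal (tagged_wait tau t n x rk S) + ennreal (t - t')" .
qed simp

lemma tie_delay_mean_pos:
  assumes "0 < mu" "0 < lam" "real_distribution P" "0 < measure P {t}"
  shows "0 < scenario_mean tau mu lam P (\<lambda>n x rk S. ennreal (tie_delay t n x rk S))"
proof (rule scenario_mean_pos[where A = "{t}" and m = 0, OF assms(1-3)])
  interpret real_distribution P by fact
  show "0 < emeasure P {t}" using assms(4) by (simp add: emeasure_eq_measure)
qed (auto simp: tie_delay_def)

lemma exp_wait_0_eq_0:
  assumes "sorted_wrt (<) tau" "0 < tau ! 0" "0 < mu" "prob_space P" "AE y in P. 0 < y"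
  shows "exp_wait tau mu lam P 0 = 0"
  unfolding exp_wait_eq_scenario_mean
proof (rule scenario_mean_eq_0[OF assms(3-5)])
  fix n :: nat and x :: "nat \<Rightarrow> real" and rk :: "nat \<Rightarrow> nat" and S :: "cust \<Rightarrow> real"
  assume "rk permutes {..n}" "\<forall>i\<in>customers (length tau) n. 0 \<le> S i" and x: "\<forall>i<n. 0 < x i"
  then interpret walkin_queue tau 0 n x rk S using assms(1) by unfold_locales
  show "ennreal (tagged_wait tau 0 n x rk S) = 0" using tagged_wait_eq_0 assms(2) x by simp
qed

lemma exp_wait_pos:
  assumes "sorted_wrt (<) tau" "0 < mu" "0 < lam" "real_distribution P" "0 \<le> m" "0 < cdf P m"
  shows "0 < exp_wait tau mu lam P m"
  unfolding exp_wait_eq_scenario_mean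
proof (rule scenario_mean_pos[where A = "{..m}", OF assms(2-4) _ _ assms(5)])
  interpret real_distribution P by fact
  show "0 < emeasure P {..m}" using assms(6) by (simp add: cdf_def emeasure_eq_measure)
next
  fix x :: "nat \<Rightarrow> real" and S :: "cust \<Rightarrow> real"
  assume "\<forall>i\<in>customers (length tau) 1. 0 \<le> S i" "x 0 \<in> {..m}"
  then interpret walkin_queue tau m 1 x id S using assms(1) permutes_id by unfold_locales simp_all
  show "ennreal (S (Inr 0) - m) \<le> ennreal (tagged_wait tau m 1 x id S)"
    using tagged_wait_ge_earlier_service \<open>x 0 \<in> {..m}\<close> by (intro ennreal_leI) simp
qed simp

section \<open>Equilibria\<close>

context real_distribution
begin

lemma atom_in_dist_support:
  assumes "0 < measure M {t}"
  shows "t \<in> dist_support M"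
  unfolding dist_support_def
proof (intro CollectI allI impI)
  fix e :: real assume "0 < e"
  then have "measure M {t} \<le> measure M {t - e<..<t + e}" by (intro finite_measure_mono) auto
  then show "0 < measure M {t - e<..<t + e}" using assms by simp
qed

lemma quantile_in_dist_support:
  assumes "0 < q" "q < 1"
  obtains m where "q \<le> cdf M m" "\<And>s. s < m \<Longrightarrow> cdf M s < q" "m \<in> dist_support M"
proof -
  define Q where "Q = {s. q \<le> cdf M s}"
  have "eventually (\<lambda>s. q < cdf M s) at_top"
    using cdf_lim_at_top_prob assms(2) by (rule order_tendstoD)
  then obtain s0 where "q < cdf M s0" by (auto simp: eventually_at_top_linorder)
  then have "s0 \<in> Q" by (simp add: Q_def)
  have "eventually (\<lambda>s. cdf M s < q) at_bot" using cdf_lim_at_bot assms(1) by (rule order_tendstoD)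
  then obtain b where b: "\<And>s. s \<le> b \<Longrightarrow> cdf M s < q" by (auto simp: eventually_at_bot_linorder)
  have bdd: "bdd_below Q"
  proof (rule bdd_belowI)
    fix s assume "s \<in> Q"
    then show "b \<le> s" using b[of s] by (cases "s \<le> b") (auto simp: Q_def)
  qed
  define m where "m = Inf Q"
  have below: "cdf M s < q" if "s < m" for s
    using that cInf_lower[OF _ bdd, of s] by (force simp: m_def Q_def)
  have "eventually (\<lambda>s. q \<le> cdf M s) (at_right m)"
  proof (rule eventually_mono[OF eventually_at_right_less])
    fix s assume "m < s"
    then obtain a where "a \<in> Q" "a < s"
      using cInf_less_iff[of Q s] \<open>s0 \<in> Q\<close> bdd by (auto simp: m_def)
    then show "q \<le> cdf M s" using cdf_nondecreasing[of a s] by (simp add: Q_def)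
  qed
  then have at_m: "q \<le> cdf M m"
    using cdf_is_right_cont[of m] by (intro tendsto_lowerbound) (auto simp: continuous_within)
  have "m \<in> dist_support M"
    unfolding dist_support_def
  proof (intro CollectI allI impI)
    fix d :: real assume "0 < d"
    then have "0 < cdf M m - cdf M (m - d)" using at_m below[of "m - d"] by simp
    also have "\<dots> = measure M {m - d<..m}" using \<open>0 < d\<close> by (intro cdf_diff_eq) simp
    also have "\<dots> \<le> measure M {m - d<..<m + d}" using \<open>0 < d\<close> by (intro finite_measure_mono) auto
    finally show "0 < measure M {m - d<..<m + d}" .
  qed
  then show thesis using that at_m below by blast
qed

end

lemma equilibrium_no_atom:
  assumes "0 < mu" "0 < lam" "sorted_wrt (<) tau" "real_distribution P"
    and "is_equilibrium tau mu lam T P" "t \<in> {0<..T}"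
  shows "measure P {t} = 0"
proof (rule ccontr)
  interpret real_distribution P by fact
  let ?G = "scenario_mean tau mu lam P (\<lambda>n x rk S. ennreal (tie_delay t n x rk S))"
  assume "measure P {t} \<noteq> 0"
  then have atom: "0 < measure P {t}" using measure_nonneg[of P "{t}"] by linarith
  obtain E where E: "\<forall>s\<in>{0..T}. (s \<in> dist_support P \<longrightarrow> exp_wait tau mu lam P s = ennreal E)
      \<and> (s \<notin> dist_support P \<longrightarrow> ennreal E \<le> exp_wait tau mu lam P s)"
    using assms(5) unfolding is_equilibrium_def by blast
  have "0 < ?G" by (rule tie_delay_mean_pos[OF assms(1,2,4) atom])
  then obtain y where "0 < y" "y < ?G" using dense by blast
  then obtain r where r: "0 < r" "ennreal r < ?G" by (cases y) auto
  define e where "e = min t r"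
  have e: "0 < e" "e \<le> t" using r assms(6) by (auto simp: e_def)
  have "ennreal e \<le> ennreal r" by (intro ennreal_leI) (simp add: e_def)
  then have e_small: "ennreal e < ?G" using r(2) by (rule order.strict_trans1)
  have "ennreal E \<le> exp_wait tau mu lam P (t - e)"
    using E e assms(6) by (cases "t - e \<in> dist_support P") auto
  then have "ennreal E + ?G \<le> exp_wait tau mu lam P (t - e) + ?G" by (rule add_right_mono)
  also have "\<dots> \<le> exp_wait tau mu lam P t + ennreal e"
    using exp_wait_earlier_le[OF assms(3,1) prob_space_axioms, of "t - e" t] e by simp
  also have "exp_wait tau mu lam P t = ennreal E"
    using E assms(6) atom_in_dist_support[OF atom] by auto
  finally have "ennreal E + ?G \<le> ennreal E + ennreal e" .
  then show False using e_small by (simp add: ennreal_add_left_cancel_le)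
qed

lemma equilibrium_atom_at_0:
  assumes "0 < mu" "0 < lam" "sorted_wrt (<) tau" "0 < tau ! 0" "real_distribution P"
    and "measure P {0..T} = 1" "is_equilibrium tau mu lam T P"
  shows "0 < cdf P 0"
proof (rule ccontr)
  interpret real_distribution P by fact
  assume "\<not> 0 < cdf P 0"
  then have cdf_0: "cdf P 0 = 0" using cdf_nonneg[of 0] by linarith
  then have "AE y in P. 0 < y"
    by (intro AE_I'[of "{..0}"]) (auto simp: cdf_def emeasure_eq_measure null_sets_def not_less)
  then have wait_0: "exp_wait tau mu lam P 0 = 0"
    by (rule exp_wait_0_eq_0[OF assms(3,4,1) prob_space_axioms])
  obtain E where E: "\<forall>s\<in>{0..T}. (s \<in> dist_support P \<longrightarrow> exp_wait tau mu lam P s = ennreal E)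
      \<and> (s \<notin> dist_support P \<longrightarrow> ennreal E \<le> exp_wait tau mu lam P s)"
    using assms(7) unfolding is_equilibrium_def by blast
  have "0 \<le> T" using assms(6) by (cases "0 \<le> T") auto
  then have "ennreal E = 0" using E wait_0 by (cases "0 \<in> dist_support P") force+
  obtain m where m: "1/2 \<le> cdf P m" "\<And>s. s < m \<Longrightarrow> cdf P s < 1/2" "m \<in> dist_support P"
    by (rule quantile_in_dist_support[of "1/2"]) simp_all
  have "0 \<le> m" using m(1) cdf_nondecreasing[of m 0] cdf_0 by (cases "0 \<le> m") auto
  moreover have "m \<le> T"
    using m(2)[of T] assms(6) finite_measure_mono[of "{0..T}" "{..T}"] by (force simp: cdf_def)
  ultimately have "exp_wait tau mu lam P m = 0" using E m(3) \<open>ennreal E = 0\<close> by auto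
  moreover have "0 < exp_wait tau mu lam P m"
    using m(1) by (intro exp_wait_pos[OF assms(3,1,2,5) \<open>0 \<le> m\<close>]) simp
  ultimately show False by simp
qed

theorem proposition1:
  fixes T mu lam :: real and tau :: "real list" and P :: "real measure"
  assumes "T > 0" and "mu > 0" and "lam > 0"
    and "tau \<noteq> []" and "sorted_wrt (<) tau" and "\<forall>s\<in>set tau. 0 \<le> s \<and> s \<le> T"
    and "real_distribution P" and "measure P {0..T} = 1"
    and "is_equilibrium tau mu lam T P"
  shows "(\<forall>t\<in>{0<..T}. (cdf P \<longlongrightarrow> cdf P t) (at_left t))
         \<and> (tau ! 0 > 0 \<longrightarrow> cdf P 0 > 0)"
proof -
  interpret real_distribution P by fact
  have "(cdf P \<longlongrightarrow> cdf P t) (at_left t)" if "t \<in> {0<..T}" for t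
  proof -
    have "isCont (cdf P) t"
      using equilibrium_no_atom[OF assms(2,3,5,7,9) that] by (simp add: isCont_cdf)
    then show ?thesis by (simp add: isCont_def filterlim_at_split)
  qed
  moreover have "0 < cdf P 0" if "0 < tau ! 0"
    using equilibrium_atom_at_0[OF assms(2,3,5) that assms(7,8,9)] .
  ultimately show ?thesis by blast
qed

end
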